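(* Let $m,n$ be nonnegative integers with $0\leqslant m\leqslant n$, let $\varepsilon\in\{+1,-1\}$, and let $z\in\mathbb{C}\setminus(-\infty,1]$. Then \begin{align*} \frac{\mathrm{d}^{m}}{\mathrm{d}z^{m}}\bigl[P_{n}(z)\ln(z+\varepsilon)\bigr] &= \frac{(2m)!}{2^{m}m!}C_{n-m}^{(m+1/2)}(z)\ln(z+\varepsilon) +\frac{(2m)!}{2^{m}m!}[\psi(n+m+1)-\psi(n-m+1)]C_{n-m}^{(m+1/2)}(z)\\ &\quad -\frac{\varepsilon^{n+m}}{2^{m}}\sum_{k=0}^{n-m}\varepsilon^{k}\frac{(k+n+m)!}{k!\,(k+m)!\,(n-m-k)!}\,[2\psi(k+n+m+1)-\psi(k+m+1)]\left(\frac{z-\varepsilon}{2}\right)^{k}\\ &\quad +\varepsilon^{n}\frac{(n+m)!}{(n-m)!}(z+\varepsilon)^{-m}\sum_{k=0}^{n}\varepsilon^{k}\frac{(k+n)!}{k!\,(k+m)!\,(n-k)!}\,[2\psi(k+n+1)-\psi(k+m+1)]\left(\frac{z-\varepsilon}{2}\right)^{k}. \end{align*}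
   Context: $P_n(z)$ denotes the Legendre polynomial of degree $n$. $C_{j}^{(\alpha)}(z)$ denotes the Gegenbauer (ultraspherical) polynomial of degree $j$ and parameter $\alpha$. $\psi(\zeta)=\Gamma'(\zeta)/\Gamma(\zeta)$ is the digamma function. The complex plane is cut along the real axis from $-\infty$ to $+1$; for $z\in\mathbb{C}\setminus(-\infty,1]$, $\ln(z\pm1)$ denotes the principal branch of the logarithm. The case $\varepsilon=+1$ concerns $\ln(z+1)$ and the case $\varepsilon=-1$ concerns $\ln(z-1)$. *)

theory Defs
  imports "HOL-Analysis.Analysis"
begin

definition legendreP :: "nat \<Rightarrow> complex \<Rightarrow> complex" where
  "legendreP n z = (\<Sum>k=0..n div 2.
      (-1)^k * fact (2*n - 2*k) / (2^n * fact k * fact (n - k) * fact (n - 2*k)) * z^(n - 2*k))"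

definition gegenbauerC :: "nat \<Rightarrow> complex \<Rightarrow> complex \<Rightarrow> complex" where
  "gegenbauerC j a z = (\<Sum>k=0..j div 2.
      (-1)^k * pochhammer a (j - k) / (fact k * fact (j - 2*k)) * (2*z)^(j - 2*k))"

end

theory Submission
  imports Defs "HOL-Computational_Algebra.Polynomial"
begin

text \<open>
  Put \<open>x = (z - e)/2\<close>. Murphy's formula \<open>P\<^sub>n(z) = e\<^sup>n \<Sum>\<^sub>k e\<^sup>k (n+k)!/(k!\<^sup>2 (n-k)!) x\<^sup>k\<close>
  holds because both sides solve Legendre's equation and have the same leading coefficient, and
  polynomial solutions of degree \<open>\<le> n\<close> are determined by that coefficient. Differentiating it
  gives \<open>(z + e)\<^sup>m D\<^sup>m P\<^sub>n(z) = e\<^sup>n (n+m)!/(n-m)! U\<^sub>m(x)\<close>, where \<open>U\<^sub>m\<close> has coefficients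
  \<open>e\<^sup>k (n+k)!/(k! (k+m)! (n-k)!)\<close>; termwise differentiation of the explicit formula for \<open>P\<^sub>n\<close>
  gives the Gegenbauer form of \<open>D\<^sup>m P\<^sub>n\<close>.

  Let \<open>R\<^sub>m\<close> be the claimed right-hand side. For \<open>m = 0\<close> the two digamma sums cancel, so
  \<open>R\<^sub>0 = P\<^sub>n(z) ln(z + e)\<close>. Expressing \<open>D\<^sup>m P\<^sub>n\<close> through \<open>U\<^sub>m\<close>, the identity \<open>R\<^sub>m' = R\<^sub>m\<^sub>+\<^sub>1\<close>
  reduces to coefficientwise recurrences for \<open>U\<^sub>m\<close> and for the digamma-weighted polynomials,
  which follow from \<open>\<psi>(j + 1) = \<psi>(j) + 1/j\<close>; induction on \<open>m\<close> concludes.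
\<close>

definition poly_of_coeffs :: "nat \<Rightarrow> (nat \<Rightarrow> 'a) \<Rightarrow> 'a::comm_semiring_1 poly" where
  "poly_of_coeffs N c = (\<Sum>k\<le>N. monom (c k) k)"

lemma coeff_poly_of_coeffs: "coeff (poly_of_coeffs N c) i = (if i \<le> N then c i else 0)"
  unfolding poly_of_coeffs_def by (simp add: coeff_sum coeff_monom)

lemma poly_poly_of_coeffs: "poly (poly_of_coeffs N c) x = (\<Sum>k\<le>N. c k * x ^ k)"
  unfolding poly_of_coeffs_def by (simp add: poly_sum poly_monom)

lemma degree_poly_of_coeffs_le: "degree (poly_of_coeffs N c) \<le> N"
  by (rule degree_le) (simp add: coeff_poly_of_coeffs)

lemma coeff_pcompose_linear_degree:
  fixes p :: "'a::idom poly"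
  assumes "degree p \<le> N" "b \<noteq> 0"
  shows "coeff (p \<circ>\<^sub>p [:a, b:]) N = coeff p N * b ^ N"
proof (cases "degree p = N")
  case True
  then have "degree (p \<circ>\<^sub>p [:a, b:]) = N" using assms by (simp add: degree_pcompose)
  then show ?thesis using lead_coeff_comp[of "[:a, b:]" p] True assms by simp
next
  case False
  with assms have "degree p < N" "degree (p \<circ>\<^sub>p [:a, b:]) < N"
    using degree_pcompose_le[of p "[:a, b:]"] by auto
  then show ?thesis by (simp add: coeff_eq_0)
qed

lemma of_nat_plus_1_neq_0 [simp]:
  "(of_nat k + 1 :: 'a::semiring_char_0) \<noteq> 0" "(1 + of_nat k :: 'a) \<noteq> 0"
  "(of_nat k + numeral w :: 'a) \<noteq> 0" "(numeral w + of_nat k :: 'a) \<noteq> 0"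
  "(of_nat j + of_nat k + 1 :: 'a) \<noteq> 0"
  by (metis of_nat_Suc of_nat_numeral of_nat_add of_nat_eq_0_iff add.commute add_is_0
      numeral_eq_Suc Suc_neq_Zero)+

section \<open>Legendre's differential equation\<close>

definition legendre_coeff :: "nat \<Rightarrow> nat \<Rightarrow> 'a::field_char_0" where
  "legendre_coeff n k = (-1)^k * fact (2*n - 2*k) / (2^n * fact k * fact (n - k) * fact (n - 2*k))"

definition legendre_poly :: "nat \<Rightarrow> 'a::field_char_0 poly" where
  "legendre_poly n = (\<Sum>k=0..n div 2. monom (legendre_coeff n k) (n - 2*k))"

lemma poly_legendre_poly: "poly (legendre_poly n) z = legendreP n z"
  unfolding legendre_poly_def legendreP_def legendre_coeff_def by (simp add: poly_sum poly_monom)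

lemma coeff_legendre_poly:
  "coeff (legendre_poly n) i = (if i \<le> n \<and> even (n - i) then legendre_coeff n ((n - i) div 2) else 0)"
proof -
  have "coeff (legendre_poly n) i
      = (\<Sum>k=0..n div 2.
          if k = (n - i) div 2 \<and> i \<le> n \<and> even (n - i) then legendre_coeff n k else 0)"
    unfolding legendre_poly_def coeff_sum coeff_monom by (rule sum.cong) auto
  also have "\<dots> = (if i \<le> n \<and> even (n - i) then legendre_coeff n ((n - i) div 2) else 0)"
  proof (cases "i \<le> n \<and> even (n - i)")
    case True
    then have "(n - i) div 2 \<in> {0..n div 2}" by auto
    then show ?thesis using True by (simp add: sum.delta')
  qed (simp only: if_False simp_thms sum.neutral_const)
  finally show ?thesis .
qed

lemma degree_legendre_poly_le: "degree (legendre_poly n) \<le> n"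
  by (rule degree_le) (simp add: coeff_legendre_poly)

text \<open>The Legendre operator \<open>(1 - x\<^sup>2) p'' - 2 x p' + n (n + 1) p\<close>;
  \<open>pCons 0\<close> is multiplication by \<open>x\<close>.\<close>

definition legendre_operator :: "nat \<Rightarrow> 'a::idom poly \<Rightarrow> 'a poly" where
  "legendre_operator n p = pderiv (pderiv p) - pCons 0 (pCons 0 (pderiv (pderiv p)))
     - smult 2 (pCons 0 (pderiv p)) + smult (of_nat (n*(n+1))) p"

lemma coeff_legendre_operator:
  "coeff (legendre_operator n p) j = of_nat ((j+1)*(j+2)) * coeff p (j+2)
     + (of_nat (n*(n+1)) - of_nat (j*(j+1))) * coeff p j"
  by (cases j; cases "j - 1")
     (simp_all add: legendre_operator_def coeff_pderiv algebra_simps numeral_2_eq_2)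

lemma legendre_operator_diff:
  "legendre_operator n (p - q) = legendre_operator n p - legendre_operator n q"
  by (intro poly_eqI) (simp add: coeff_legendre_operator algebra_simps)

text \<open>The coefficient recursion of \<open>legendre_operator n p = 0\<close> determines \<open>coeff p j\<close> from
  \<open>coeff p (j+2)\<close> with the nonzero factor \<open>n(n+1) - j(j+1)\<close> for \<open>j < n\<close>.\<close>

lemma legendre_operator_eq_0_imp_eq_0:
  fixes p :: "'a::field_char_0 poly"
  assumes "legendre_operator n p = 0" and high: "\<And>k. k \<ge> n \<Longrightarrow> coeff p k = 0"
  shows "p = 0"
proof -
  have "coeff p j = 0" if "n - j \<le> d" for d j
    using that
  proof (induction d arbitrary: j)
    case (Suc d)
    show ?case
    proof (cases "j \<ge> n")
      case False
      have "j*(j+1) < n*(n+1)" using False by (intro mult_strict_mono) auto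
      then have "(of_nat (n*(n+1)) - of_nat (j*(j+1)) :: 'a) \<noteq> 0"
        by (metis eq_iff_diff_eq_0 less_irrefl of_nat_eq_iff)
      moreover have "coeff p (j+2) = 0" using Suc False by auto
      moreover have "coeff (legendre_operator n p) j = 0" using assms(1) by simp
      ultimately show ?thesis by (simp add: coeff_legendre_operator)
    qed (use high in auto)
  qed (use high in auto)
  then show ?thesis by (metis le_refl coeff_0 poly_eqI)
qed

text \<open>The \<open>key\<close> facts here and below state the needed field identity with the factorials (and
  later the digamma values) replaced by variables, so that \<open>field_simps\<close> cannot unfold them.\<close>

lemma legendre_coeff_recurrence:
  "of_nat ((i+1)*(i+2)) * legendre_coeff (i + 2*t + 2) t
     + (of_nat ((i + 2*t + 2)*(i + 2*t + 2 + 1)) - of_nat (i*(i+1))) * legendre_coeff (i + 2*t + 2) (t+1)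
   = (0 :: 'a::field_char_0)"
proof -
  define n where "n = i + 2*t + 2"
  define X :: 'a where "X = (-1)^t * fact (2*i+2*t+2) / (2^n * fact t * fact (i+t+1) * fact i)"
  have idx: "2*n - 2*(t+1) = 2*i + 2*t + 2" "2*n - 2*t = Suc (Suc (2*i+2*t+2))"
     "n - (t+1) = i + t + 1" "n - t = Suc (i+t+1)" "n - 2*(t+1) = i" "n - 2*t = Suc (Suc i)"
    by (auto simp: n_def)
  have f1: "(fact (Suc (Suc (2*i+2*t+2))) :: 'a)
      = (2 * (of_nat (i + t) + 2)) * (2 * of_nat i + 2 * of_nat t + 3) * fact (2*i+2*t+2)"
    by (simp add: algebra_simps)
  have f2: "(fact (Suc (i+t+1)) :: 'a) = (of_nat (i + t) + 2) * fact (i+t+1)"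
    by (simp add: algebra_simps)
  have f3: "(fact (Suc (Suc i)) :: 'a) = (of_nat i + 2) * (of_nat i + 1) * fact i"
    by (simp add: algebra_simps)
  have f4: "(fact (t+1) :: 'a) = (of_nat t + 1) * fact t"
    by (simp add: algebra_simps)
  have A: "legendre_coeff n t = X * (2 * (2 * of_nat i + 2 * of_nat t + 3)) / ((of_nat i + 2) * (of_nat i + 1))"
  proof -
    have key: "s * ((2*q)*c*F1) / (P*T*(q*F2)*(r*u*F3)) = s*F1/(P*T*F2*F3) * (2*c) / (r*u)"
      if "F2 \<noteq> 0" "F3 \<noteq> 0" "T \<noteq> 0" "P \<noteq> 0" "q \<noteq> 0" "r \<noteq> 0" "u \<noteq> 0"
      for F1 F2 F3 T P s q c r u :: 'a
      using that by (simp add: field_simps)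
    show ?thesis
      unfolding legendre_coeff_def idx X_def f1 f2 f3 by (rule key) (simp_all del: of_nat_add)
  qed
  have B: "legendre_coeff n (t+1) = - X / (of_nat t + 1)"
  proof -
    have key: "(-1)^(t+1) * F1 / (P*(a*T)*F2*F3) = - ((-1)^t * F1 / (P*T*F2*F3)) / a"
      if "F2 \<noteq> 0" "F3 \<noteq> 0" "T \<noteq> 0" "P \<noteq> 0" "a \<noteq> 0" for F1 F2 F3 T P a :: 'a
      using that by (simp add: field_simps)
    show ?thesis
      unfolding legendre_coeff_def idx X_def f4 by (rule key) (simp_all del: of_nat_add)
  qed
  have C: "(of_nat (n*(n+1)) - of_nat (i*(i+1)) :: 'a) = (2 * of_nat t + 2) * (2 * of_nat i + 2 * of_nat t + 3)"
    unfolding n_def by (simp add: algebra_simps)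
  have key: "u*r*(X*(2*c)/(r*u)) + (2 * v + 2) * c*(-X/(v+1)) = 0"
    if "r \<noteq> 0" "u \<noteq> 0" "v+1 \<noteq> 0" for c r u v :: 'a
    using that by (simp add: field_simps)
  have D: "(of_nat ((i+1)*(i+2)) :: 'a) = (of_nat i + 1) * (of_nat i + 2)"
    by (simp add: algebra_simps)
  show ?thesis unfolding n_def[symmetric] A B C D by (rule key) simp_all
qed

lemma legendre_operator_legendre_poly:
  "legendre_operator n (legendre_poly n :: 'a::field_char_0 poly) = 0"
proof (intro poly_eqI)
  fix i
  show "coeff (legendre_operator n (legendre_poly n :: 'a poly)) i = coeff 0 i"
  proof (cases "i < n \<and> even (n - i)")
    case True
    then obtain d where d: "n - i = 2*d" by (metis evenE)
    define t where "t = d - 1"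
    have n: "n = i + 2*t + 2" using d True unfolding t_def by (cases d) auto
    have "coeff (legendre_poly n :: 'a poly) i = legendre_coeff n (t+1)"
      "coeff (legendre_poly n :: 'a poly) (i+2) = legendre_coeff n t"
      using n by (simp_all add: coeff_legendre_poly)
    then show ?thesis
      using legendre_coeff_recurrence[of i t] n by (simp add: coeff_legendre_operator)
  next
    case False
    then have "\<not> (i+2 \<le> n \<and> even (n - (i+2)))" "i = n \<or> \<not> (i \<le> n \<and> even (n - i))"
      by presburger+
    then show ?thesis by (auto simp: coeff_legendre_operator coeff_legendre_poly)
  qed
qed

section \<open>Murphy's formula\<close>

text \<open>For \<open>e = 1\<close> and \<open>m = 0\<close>, \<open>murphy_coeff\<close> is \<open>binom n k binom (n+k) k\<close>, the coefficient in
  Murphy's formula \<open>P\<^sub>n(z) = \<Sum>\<^sub>k binom n k binom (n+k) k ((z-1)/2)\<^sup>k\<close>; \<open>e = -1\<close> gives its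
  reflection \<open>P\<^sub>n(z) = (-1)\<^sup>n P\<^sub>n(-z)\<close>. The polynomial \<open>murphy_poly n e m\<close> is \<open>U\<^sub>m\<close>.\<close>

definition murphy_coeff :: "nat \<Rightarrow> 'a \<Rightarrow> nat \<Rightarrow> nat \<Rightarrow> 'a::field_char_0" where
  "murphy_coeff n e m k = e^k * fact (k+n) / (fact k * fact (k+m) * fact (n-k))"

definition murphy_poly :: "nat \<Rightarrow> 'a \<Rightarrow> nat \<Rightarrow> 'a::field_char_0 poly" where
  "murphy_poly n e m = poly_of_coeffs n (murphy_coeff n e m)"

lemma murphy_coeff_Suc:
  assumes "k < n"
  shows "murphy_coeff n e m (Suc k)
    = e * murphy_coeff n e m k * of_nat (n-k) * of_nat (n+k+1) / (of_nat (k+1) * of_nat (k+m+1))"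
proof -
  have f1: "(fact (Suc k + n) :: 'a) = of_nat (n+k+1) * fact (k+n)" by (simp add: algebra_simps)
  have f2: "(fact (Suc k) :: 'a) = of_nat (k+1) * fact k" by simp
  have f3: "(fact (Suc k + m) :: 'a) = of_nat (k+m+1) * fact (k+m)" by (simp add: algebra_simps)
  have f4: "(fact (n - k) :: 'a) = of_nat (n-k) * fact (n - Suc k)"
    using assms by (metis Suc_diff_Suc fact_Suc)
  have key: "e^(Suc k) * (A*Fa) / ((B*Fb)*(C*Fc)*Fd) = e * (e^k*Fa/(Fb*Fc*(D*Fd))) * D * A / (B*C)"
    if "Fb \<noteq> 0" "Fc \<noteq> 0" "Fd \<noteq> 0" "B \<noteq> 0" "C \<noteq> 0" "D \<noteq> 0" for A B C D Fa Fb Fc Fd :: 'a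
    using that by (simp add: field_simps)
  show ?thesis unfolding murphy_coeff_def f1 f2 f3 f4
    by (rule key) (use assms in \<open>simp_all del: of_nat_add\<close>)
qed

lemma murphy_coeff_Suc_order: "murphy_coeff n e (Suc m) k = murphy_coeff n e m k / of_nat (k+m+1)"
proof -
  have "(fact (k + Suc m) :: 'a) = of_nat (k+m+1) * fact (k+m)" by (simp add: algebra_simps)
  then show ?thesis unfolding murphy_coeff_def by (simp add: field_simps del: of_nat_add)
qed

text \<open>The Legendre operator in the variable \<open>x = (z - e)/2\<close>, assuming \<open>e\<^sup>2 = 1\<close>:
  \<open>n(n+1) q - x(x + e) q'' - (2x + e) q'\<close>.\<close>

definition shifted_legendre_operator :: "nat \<Rightarrow> 'a \<Rightarrow> 'a::idom poly \<Rightarrow> 'a poly" where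
  "shifted_legendre_operator n e q = smult (of_nat (n*(n+1))) q - pCons 0 (pCons 0 (pderiv (pderiv q)))
     - smult e (pCons 0 (pderiv (pderiv q))) - smult 2 (pCons 0 (pderiv q)) - smult e (pderiv q)"

lemma coeff_shifted_legendre_operator:
  "coeff (shifted_legendre_operator n e q) k = (of_nat (n*(n+1)) - of_nat (k*(k+1))) * coeff q k
     - e * of_nat ((k+1)*(k+1)) * coeff q (k+1)"
  by (cases k; cases "k - 1")
     (simp_all add: shifted_legendre_operator_def coeff_pderiv algebra_simps numeral_2_eq_2)

lemma shifted_legendre_operator_murphy_poly:
  assumes "e * e = 1"
  shows "shifted_legendre_operator n e (murphy_poly n e 0) = 0"
proof (intro poly_eqI)
  fix k
  show "coeff (shifted_legendre_operator n e (murphy_poly n e 0)) k = coeff 0 k"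
  proof (cases "k < n")
    case True
    have next_coeff: "murphy_coeff n e 0 (Suc k)
        = e * murphy_coeff n e 0 k * of_nat (n-k) * of_nat (n+k+1) / (of_nat (k+1) * of_nat (k+1))"
      using murphy_coeff_Suc[OF True, of e 0] by simp
    have factor_n: "(of_nat (n*(n+1)) - of_nat (k*(k+1)) :: 'a) = of_nat (n-k) * of_nat (n+k+1)"
      using True by (simp add: of_nat_diff algebra_simps)
    have factor_k: "(of_nat ((k+1)*(k+1)) :: 'a) = of_nat (k+1) * of_nat (k+1)"
      by (simp add: algebra_simps)
    have key: "D*E*u - e*(K*K)*(e*u*D*E/(K*K)) = 0" if "K \<noteq> 0" for D E u K :: 'a
      using that assms by (simp add: field_simps)
    show ?thesis
      unfolding coeff_shifted_legendre_operator murphy_poly_def coeff_poly_of_coeffs factor_n factor_k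
      using True
      by (simp only: if_True Suc_eq_plus1[symmetric] less_eq_Suc_le next_coeff less_imp_le coeff_0)
         (rule key, simp)
  qed (simp add: coeff_shifted_legendre_operator murphy_poly_def coeff_poly_of_coeffs)
qed

lemma poly_legendre_operator_pcompose_shift:
  fixes e x :: "'a::field_char_0"
  assumes "e * e = 1"
  shows "poly (legendre_operator n (q \<circ>\<^sub>p [:-e/2, 1/2:])) (2*x + e)
    = poly (shifted_legendre_operator n e q) x"
proof -
  define l where "l = [:-e/2, 1/2:]"
  have lin: "poly l (2*x + e) = x" by (simp add: l_def field_simps)
  have d: "pderiv (p \<circ>\<^sub>p l) = smult (1/2) (pderiv p \<circ>\<^sub>p l)" for p :: "'a poly"
    by (simp add: l_def pderiv_pcompose pderiv_pCons)
  have "poly (legendre_operator n (q \<circ>\<^sub>p l)) (2*x + e)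
      = (1/2) * (1/2) * poly (pderiv (pderiv q)) x
        - (2*x + e) * ((2*x + e) * ((1/2) * (1/2) * poly (pderiv (pderiv q)) x))
        - 2 * ((2*x + e) * ((1/2) * poly (pderiv q) x)) + of_nat (n*(n+1)) * poly q x"
    by (simp add: legendre_operator_def d pderiv_smult poly_pcompose lin)
  also have "\<dots> = poly (shifted_legendre_operator n e q) x"
  proof -
    have "e * (e * w) = w" for w using assms by (metis mult.assoc mult_1)
    then show ?thesis by (simp add: shifted_legendre_operator_def field_simps)
  qed
  finally show ?thesis unfolding l_def .
qed

lemma legendre_poly_eq_murphy:
  fixes e :: "'a::field_char_0"
  assumes e: "e * e = 1"
  shows "legendre_poly n = smult (e^n) (murphy_poly n e 0) \<circ>\<^sub>p [:-e/2, 1/2:]"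
    (is "_ = ?M")
proof -
  have "shifted_legendre_operator n e (smult (e^n) (murphy_poly n e 0)) = 0"
    using shifted_legendre_operator_murphy_poly[OF e, of n]
    by (intro poly_eqI) (simp add: coeff_shifted_legendre_operator poly_eq_iff algebra_simps)
  then have shifted: "poly (legendre_operator n ?M) (2*x + e) = 0" for x
    using poly_legendre_operator_pcompose_shift[OF e] by simp
  have "poly (legendre_operator n ?M) z = 0" for z
    using shifted[of "(z - e)/2"] by (simp add: field_simps)
  then have "legendre_operator n ?M = 0" using poly_all_0_iff_0 by blast
  then have "legendre_operator n (legendre_poly n - ?M) = 0"
    by (simp add: legendre_operator_diff legendre_operator_legendre_poly)
  moreover have "coeff (legendre_poly n - ?M) k = 0" if "k \<ge> n" for k
  proof -
    have deg_U: "degree (smult (e^n) (murphy_poly n e 0)) \<le> n"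
      using degree_poly_of_coeffs_le degree_smult_le order_trans unfolding murphy_poly_def by blast
    show ?thesis
    proof (cases "k = n")
      case True
      have "e^n * e^n = 1" using e by (metis power_mult_distrib power_one)
      then have "coeff ?M n = legendre_coeff n 0"
        using coeff_pcompose_linear_degree[OF deg_U, of "1/2" "-e/2"]
        by (simp add: murphy_poly_def coeff_poly_of_coeffs murphy_coeff_def legendre_coeff_def
            field_simps flip: mult.assoc) (simp add: mult_2_right)
      then show ?thesis using True by (simp add: coeff_legendre_poly)
    next
      case False
      have "degree ?M \<le> n"
        using degree_pcompose_le[of "smult (e^n) (murphy_poly n e 0)" "[:-e/2, 1/2:]"] deg_U by simp
      with that False have "degree ?M < k" by linarith
      moreover have "degree (legendre_poly n :: 'a poly) < k"
        using degree_legendre_poly_le[where 'a='a, of n] that False by linarith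
      ultimately show ?thesis by (simp add: coeff_eq_0)
    qed
  qed
  ultimately have "legendre_poly n - ?M = 0" by (rule legendre_operator_eq_0_imp_eq_0)
  then show ?thesis by simp
qed

lemma murphy_poly_Suc_order:
  fixes e :: "'a::field_char_0"
  assumes e: "e * e = 1" and "m < n"
  shows "pCons 0 (pderiv (murphy_poly n e m)) + smult e (pderiv (murphy_poly n e m))
      - smult (of_nat m) (murphy_poly n e m)
    = smult (of_nat ((n+m+1)*(n-m))) (murphy_poly n e (Suc m))"
    (is "?L = ?R")
proof (intro poly_eqI)
  fix k
  let ?u = "murphy_coeff n e m"
  have x_pderiv: "coeff (pCons 0 (pderiv p)) k = of_nat k * coeff p k" for p :: "'a poly"
    by (cases k) (simp_all add: coeff_pderiv)
  have coeff_L: "coeff ?L k = of_nat k * coeff (murphy_poly n e m) k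
      + e * (of_nat k + 1) * coeff (murphy_poly n e m) (Suc k) - of_nat m * coeff (murphy_poly n e m) k"
    by (simp add: x_pderiv coeff_pderiv algebra_simps)
  consider "k < n" | "k = n" | "k > n" by linarith
  then show "coeff ?L k = coeff ?R k"
  proof cases
    case 1
    have key: "K*u + e*(K+1)*(e*u*(N-K)*(N+K+1)/((K+1)*(K+M+1))) - M*u = (N+M+1)*(N-M)*(u/(K+M+1))"
      if "K+1 \<noteq> 0" "K+M+1 \<noteq> 0" for K M N u :: 'a
    proof -
      have ee: "e * (e * w) = w" for w using e by (metis mult.assoc mult_1)
      have "K*u + e*D1*(e*u*(N-K)*(N+K+1)/(D1*D2)) - M*u = (N+M+1)*(N-M)*(u/D2)"
        if "D1 \<noteq> 0" "D2 \<noteq> 0" "K = D1 - 1" "M = D2 - D1" for D1 D2 K M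
        using that(1,2) unfolding that(3,4) by (simp add: field_simps ee)
      from this[of "K+1" "K+M+1" K M] that show ?thesis by simp
    qed
    have u_Suc: "?u (Suc k) = e * ?u k * (of_nat n - of_nat k) * (of_nat n + of_nat k + 1)
        / ((of_nat k + 1) * (of_nat k + of_nat m + 1))"
      unfolding murphy_coeff_Suc[OF 1] using 1 by (simp add: of_nat_diff ac_simps)
    have coeff_R: "coeff ?R k
        = (of_nat n + of_nat m + 1) * (of_nat n - of_nat m) * (?u k / (of_nat k + of_nat m + 1))"
      using 1 \<open>m < n\<close>
      by (simp add: murphy_poly_def coeff_poly_of_coeffs murphy_coeff_Suc_order of_nat_diff)
        (simp add: algebra_simps)
    have "coeff ?L k = of_nat k * ?u k + e * (of_nat k + 1) * ?u (Suc k) - of_nat m * ?u k"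
      unfolding coeff_L using 1 by (simp add: murphy_poly_def coeff_poly_of_coeffs)
    then show ?thesis unfolding coeff_R u_Suc by (simp only:) (rule key; simp)
  next
    case 2
    have "coeff ?R k = (of_nat n + of_nat m + 1) * (of_nat n - of_nat m) * (?u n / (of_nat n + of_nat m + 1))"
      unfolding 2 murphy_poly_def coeff_smult coeff_poly_of_coeffs murphy_coeff_Suc_order
      by (simp only: le_refl if_True of_nat_mult of_nat_add of_nat_1 of_nat_diff[OF less_imp_le[OF \<open>m < n\<close>]])
    moreover have "coeff ?L k = (of_nat n - of_nat m) * ?u n"
      unfolding coeff_L unfolding 2 by (simp add: murphy_poly_def coeff_poly_of_coeffs algebra_simps)
    ultimately show ?thesis by simp
  next
    case 3
    then show ?thesis unfolding coeff_L by (simp add: murphy_poly_def coeff_poly_of_coeffs)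
  qed
qed

section \<open>Higher derivatives of Legendre polynomials\<close>

lemma higher_pderiv_monom_fact:
  fixes c :: "'a::field_char_0"
  shows "(pderiv ^^ m) (monom c d) = (if m \<le> d then monom (c * fact d / fact (d - m)) (d - m) else 0)"
proof (induction m)
  case (Suc m)
  show ?case
  proof (cases "Suc m \<le> d")
    case True
    then have "(fact (d - m) :: 'a) = of_nat (d - m) * fact (d - Suc m)"
      by (metis Suc_diff_le diff_Suc_Suc fact_Suc)
    with True Suc show ?thesis by (simp add: pderiv_monom)
  next
    case False
    with Suc show ?thesis by (auto simp: pderiv_monom)
  qed
qed simp

lemma pochhammer_of_nat_plus_half:
  "pochhammer (of_nat m + 1/2 :: 'a::field_char_0) N
     = fact (2*(m+N)) * fact m / (4^N * fact (m+N) * fact (2*m))"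
proof -
  have "(4::'a)^j = 2^(2*j)" for j by (simp add: power_mult)
  then have half: "pochhammer (1/2 :: 'a) j = fact (2*j) / (4^j * fact j)" for j
    using fact_double[of j, where 'a='a] by (simp add: field_simps)
  have "pochhammer (1/2 :: 'a) (m + N) = pochhammer (1/2) m * pochhammer (of_nat m + 1/2) N"
    using pochhammer_product'[of "1/2::'a" m N] by (simp add: add.commute)
  then show ?thesis unfolding half by (simp add: field_simps power_add)
qed

lemma legendreP_eq_murphy:
  assumes "e * e = 1"
  shows "legendreP n z = e^n * poly (murphy_poly n e 0) ((z - e)/2)"
  unfolding poly_legendre_poly[symmetric] legendre_poly_eq_murphy[OF assms]
  by (simp add: poly_pcompose field_simps)

lemma legendre_coeff_higher_pderiv_eq_gegenbauer_coeff:
  fixes z :: complex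
  assumes "2*k \<le> n - m" "m \<le> n"
  shows "legendre_coeff n k * fact (n - 2*k) / fact (n - 2*k - m) * z^(n - 2*k - m)
    = fact (2*m) / (2^m * fact m) * ((-1)^k * pochhammer (of_nat m + 1/2) (n - m - k)
        / (fact k * fact (n - m - 2*k)) * (2*z)^(n - m - 2*k))"
proof -
  define r where "r = n - m - 2*k"
  have n: "n = m + r + 2*k" using assms unfolding r_def by simp
  have idx: "2*n - 2*k = 2*(m+r+k)" "n - k = m+r+k" "n - 2*k = m + r" "n - 2*k - m = r"
     "n - m - k = r + k" "n - m - 2*k = r"
    using n by auto
  have "(2::complex)^n = 2^m * 2^r * 4^k" "(4::complex)^(r+k) = 2^r * 2^r * 4^k"
    unfolding n by (simp_all add: power_add power_mult_distrib power_mult flip: power_mult_distrib)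
  then show ?thesis
    unfolding legendre_coeff_def idx pochhammer_of_nat_plus_half
    by (simp add: field_simps power_mult_distrib)
qed

lemma poly_higher_pderiv_legendre_poly:
  assumes "m \<le> n"
  shows "poly ((pderiv ^^ m) (legendre_poly n)) z
    = fact (2*m) / (2^m * fact m) * gegenbauerC (n - m) (of_nat m + 1/2) z"
proof -
  let ?term = "\<lambda>k. legendre_coeff n k * fact (n - 2*k) / fact (n - 2*k - m) * z^(n - 2*k - m)"
  have "poly ((pderiv ^^ m) (legendre_poly n)) z
      = (\<Sum>k=0..n div 2. if m \<le> n - 2*k then ?term k else 0)"
    unfolding legendre_poly_def higher_pderiv_sum higher_pderiv_monom_fact poly_sum
    by (intro sum.cong) (simp_all add: poly_monom)
  also have "\<dots> = (\<Sum>k=0..(n-m) div 2. ?term k)"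
    using assms by (intro sum.mono_neutral_cong_right) auto
  also have "\<dots> = (\<Sum>k=0..(n-m) div 2. fact (2*m) / (2^m * fact m) * ((-1)^k
      * pochhammer (of_nat m + 1/2) (n - m - k) / (fact k * fact (n - m - 2*k)) * (2*z)^(n - m - 2*k)))"
    using assms by (intro sum.cong refl legendre_coeff_higher_pderiv_eq_gegenbauer_coeff) auto
  finally show ?thesis unfolding gegenbauerC_def sum_distrib_left .
qed

definition murphy_scale :: "nat \<Rightarrow> complex \<Rightarrow> nat \<Rightarrow> complex" where
  "murphy_scale n e m = e^n * fact (n+m) / fact (n-m)"

lemma murphy_scale_Suc:
  assumes "m < n"
  shows "murphy_scale n e (Suc m) = murphy_scale n e m * of_nat ((n+m+1)*(n-m))"
proof -
  have f1: "(fact (n + Suc m) :: complex) = of_nat (n+m+1) * fact (n+m)" by simp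
  have f2: "(fact (n - m) :: complex) = of_nat (n-m) * fact (n - Suc m)"
    using assms by (metis Suc_diff_Suc fact_Suc)
  have "(of_nat (n-m) :: complex) \<noteq> 0" using assms by simp
  then show ?thesis unfolding murphy_scale_def f1 f2 by (simp add: field_simps)
qed

text \<open>Differentiating the identity for \<open>m\<close> and multiplying by \<open>z + e\<close> produces the operator
  \<open>(x + e) D - m\<close> of \<open>murphy_poly_Suc_order\<close>.\<close>

lemma legendre_higher_deriv_eq_murphy:
  fixes z e :: complex
  assumes e: "e * e = 1"
  shows "m \<le> n \<Longrightarrow> (z + e)^m * poly ((pderiv ^^ m) (legendre_poly n)) z
    = murphy_scale n e m * poly (murphy_poly n e m) ((z - e)/2)"
proof (induction m arbitrary: z)
  case 0
  then show ?case using legendreP_eq_murphy[OF e, of n z] by (simp add: murphy_scale_def poly_legendre_poly)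
next
  case (Suc m)
  then have "m < n" "m \<le> n" by simp_all
  let ?P = "(pderiv ^^ m) (legendre_poly n)" and ?U = "murphy_poly n e m" and ?c = "murphy_scale n e m"
  have IH: "(\<lambda>z. (z + e)^m * poly ?P z) = (\<lambda>z. ?c * poly ?U ((z - e)/2))"
    using Suc by auto
  have "((\<lambda>z. (z + e)^m * poly ?P z) has_field_derivative
      of_nat m * (z + e)^(m-1) * poly ?P z + (z + e)^m * poly (pderiv ?P) z) (at z)"
    by (auto intro!: derivative_eq_intros)
  moreover have "((\<lambda>z. ?c * poly ?U ((z - e)/2)) has_field_derivative
      ?c * (poly (pderiv ?U) ((z - e)/2) * (1/2))) (at z)"
    by (auto intro!: derivative_eq_intros DERIV_chain2[OF poly_DERIV])
  ultimately have deriv: "of_nat m * (z + e)^(m-1) * poly ?P z + (z + e)^m * poly (pderiv ?P) z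
      = ?c * (poly (pderiv ?U) ((z - e)/2) * (1/2))"
    unfolding IH by (rule DERIV_unique)
  have "(z + e) * (of_nat m * (z + e)^(m-1) * poly ?P z) = of_nat m * ((z + e)^m * poly ?P z)"
    by (cases m) (simp_all add: algebra_simps)
  then have "(z + e)^(Suc m) * poly (pderiv ?P) z
      = (z + e) * (?c * (poly (pderiv ?U) ((z - e)/2) * (1/2))) - of_nat m * ((z + e)^m * poly ?P z)"
    unfolding deriv[symmetric] distrib_left by (simp add: algebra_simps)
  also have "\<dots> = ?c * poly (pCons 0 (pderiv ?U) + smult e (pderiv ?U) - smult (of_nat m) ?U) ((z - e)/2)"
    unfolding Suc.IH[OF \<open>m \<le> n\<close>] by (simp add: field_simps)
  also have "\<dots> = murphy_scale n e (Suc m) * poly (murphy_poly n e (Suc m)) ((z - e)/2)"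
    unfolding murphy_poly_Suc_order[OF e \<open>m < n\<close>] murphy_scale_Suc[OF \<open>m < n\<close>] by simp
  finally show ?case by simp
qed

section \<open>Higher derivatives of \<open>P\<^sub>n(z) ln(z + e)\<close>\<close>

lemma Digamma_of_nat_Suc:
  "Digamma (of_nat (Suc (Suc j)) :: complex) = Digamma (of_nat (Suc j)) + 1 / of_nat (Suc j)"
proof -
  have "(of_nat (Suc (Suc j)) :: complex) = of_nat (Suc j) + 1" by simp
  then show ?thesis using Digamma_plus1[of "of_nat (Suc j) :: complex"] by (simp del: of_nat_Suc)
qed

definition digamma_coeff :: "nat \<Rightarrow> complex \<Rightarrow> nat \<Rightarrow> nat \<Rightarrow> complex" where
  "digamma_coeff n e m k = e^k * fact (k + n + m) / (fact k * fact (k + m) * fact (n - m - k))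
     * (2 * Digamma (of_nat (k + n + m + 1)) - Digamma (of_nat (k + m + 1)))"

definition digamma_poly :: "nat \<Rightarrow> complex \<Rightarrow> nat \<Rightarrow> complex poly" where
  "digamma_poly n e m = poly_of_coeffs (n - m) (digamma_coeff n e m)"

lemma pderiv_digamma_poly:
  assumes "m < n"
  shows "pderiv (digamma_poly n e m) = smult e (digamma_poly n e (Suc m))"
proof (intro poly_eqI)
  fix k
  have idx: "Suc k + n + m = k + n + Suc m" "Suc k + m = k + Suc m" "n - m - Suc k = n - Suc m - k"
    by auto
  have key: "K1 * (e^(Suc k) * F / ((K1 * Fk) * G * H) * P) = e * (e^k * F / (Fk * G * H) * P)"
    if "K1 \<noteq> 0" "Fk \<noteq> 0" "G \<noteq> 0" "H \<noteq> 0" for K1 Fk F G H P :: complex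
    using that by (simp add: field_simps)
  have "of_nat (Suc k) * digamma_coeff n e m (Suc k) = e * digamma_coeff n e (Suc m) k"
    unfolding digamma_coeff_def idx fact_Suc[of k] by (rule key) (simp_all del: of_nat_Suc)
  moreover have "(Suc k \<le> n - m) = (k \<le> n - Suc m)" using assms by auto
  ultimately show "coeff (pderiv (digamma_poly n e m)) k = coeff (smult e (digamma_poly n e (Suc m))) k"
    unfolding coeff_pderiv coeff_smult digamma_poly_def coeff_poly_of_coeffs by simp
qed

definition digamma_murphy_coeff :: "nat \<Rightarrow> complex \<Rightarrow> nat \<Rightarrow> nat \<Rightarrow> complex" where
  "digamma_murphy_coeff n e m k
     = murphy_coeff n e m k * (2 * Digamma (of_nat (k + n + 1)) - Digamma (of_nat (k + m + 1)))"

definition digamma_murphy_poly :: "nat \<Rightarrow> complex \<Rightarrow> nat \<Rightarrow> complex poly" where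
  "digamma_murphy_poly n e m = poly_of_coeffs n (digamma_murphy_coeff n e m)"

lemma Digamma_of_nat_shift:
  "Digamma (of_nat (Suc k + j + 1) :: complex)
     = Digamma (of_nat (k + j + 1)) + 1/(of_nat k + of_nat j + 1)"
  using Digamma_of_nat_Suc[of "k + j"] by (simp add: add_ac)

lemma digamma_murphy_coeff_recurrence:
  assumes e: "e * e = 1" and "m < n" "k < n"
  shows "murphy_coeff n e m k + of_nat k * digamma_murphy_coeff n e m k
      + e * (of_nat k + 1) * digamma_murphy_coeff n e m (Suc k) - of_nat m * digamma_murphy_coeff n e m k
    = of_nat (2*n+1) * murphy_coeff n e (Suc m) k
      + of_nat ((n+m+1)*(n-m)) * digamma_murphy_coeff n e (Suc m) k"
proof -
  let ?u = "murphy_coeff n e m"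
  define A where "A = Digamma (of_nat (k + n + 1) :: complex)"
  define B where "B = Digamma (of_nat (k + m + 1) :: complex)"
  have ee: "e * (e * w) = w" for w using e by (metis mult.assoc mult_1)
  have key: "u + K*(u*(2*A-B)) + e*D1*((e*u*(N-K)*D3/(D1*D2)) * (2*(A + 1/D3) - (B + 1/D2)))
        - M*(u*(2*A-B))
      = (2*N+1)*(u/D2) + (N+M+1)*(N-M)*((u/D2)*(2*A - (B + 1/D2)))"
    if "D1 \<noteq> 0" "D2 \<noteq> 0" "D3 \<noteq> 0" "K = D1 - 1" "M = D2 - D1" "N = D3 - D1"
    for D1 D2 D3 K M N u :: complex
    using that(1-3) unfolding that(4-6) by (simp add: field_simps ee)
  have u_Suc: "?u (Suc k) = e * ?u k * (of_nat n - of_nat k) * (of_nat k + of_nat n + 1)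
      / ((of_nat k + 1) * (of_nat k + of_nat m + 1))"
    unfolding murphy_coeff_Suc[OF \<open>k < n\<close>] using \<open>k < n\<close> by (simp add: of_nat_diff ac_simps)
  have ab: "(of_nat ((n+m+1)*(n-m)) :: complex) = (of_nat n + of_nat m + 1) * (of_nat n - of_nat m)"
    using \<open>m < n\<close> by (simp add: of_nat_diff) (simp add: algebra_simps)
  have B_shift: "Digamma (of_nat (k + Suc m + 1) :: complex) = B + 1/(of_nat k + of_nat m + 1)"
    using Digamma_of_nat_shift[of k m] by (simp add: B_def)
  have nonzero: "(of_nat k + 1 :: complex) \<noteq> 0" "(of_nat k + of_nat m + 1 :: complex) \<noteq> 0"
    "(of_nat k + of_nat n + 1 :: complex) \<noteq> 0"
    by simp_all
  show ?thesis
    using B_shift key[of "of_nat k + 1" "of_nat k + of_nat m + 1" "of_nat k + of_nat n + 1"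
      "of_nat k" "of_nat m" "of_nat n" "?u k", OF nonzero]
    unfolding digamma_murphy_coeff_def murphy_coeff_Suc_order u_Suc Digamma_of_nat_shift ab
      A_def[symmetric] B_def[symmetric]
    by (simp add: add_ac)
qed

lemma digamma_murphy_poly_Suc_order:
  assumes e: "e * e = 1" and "m < n"
  shows "murphy_poly n e m + (pCons 0 (pderiv (digamma_murphy_poly n e m))
      + smult e (pderiv (digamma_murphy_poly n e m)) - smult (of_nat m) (digamma_murphy_poly n e m))
    = smult (of_nat (2*n+1)) (murphy_poly n e (Suc m))
      + smult (of_nat ((n+m+1)*(n-m))) (digamma_murphy_poly n e (Suc m))"
    (is "?L = ?R")
proof (intro poly_eqI)
  fix k
  let ?u = "murphy_coeff n e m" and ?S = "digamma_murphy_poly n e m"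
  have x_pderiv: "coeff (pCons 0 (pderiv ?S)) k = of_nat k * coeff ?S k"
    by (cases k) (simp_all add: coeff_pderiv)
  have coeff_L: "coeff ?L k = coeff (murphy_poly n e m) k + of_nat k * coeff ?S k
      + e * (of_nat k + 1) * coeff ?S (Suc k) - of_nat m * coeff ?S k"
    by (simp add: x_pderiv coeff_pderiv algebra_simps)
  have coeff_R: "coeff ?R k = (if k \<le> n then of_nat (2*n+1) * murphy_coeff n e (Suc m) k
      + of_nat ((n+m+1)*(n-m)) * digamma_murphy_coeff n e (Suc m) k else 0)"
    by (simp add: murphy_poly_def digamma_murphy_poly_def coeff_poly_of_coeffs)
  consider "k < n" | "k = n" | "k > n" by linarith
  then show "coeff ?L k = coeff ?R k"
  proof cases
    case 1
    then show ?thesis unfolding coeff_L coeff_R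
      using digamma_murphy_coeff_recurrence[OF e \<open>m < n\<close> 1]
      by (simp add: murphy_poly_def digamma_murphy_poly_def coeff_poly_of_coeffs)
  next
    case 2
    let ?A = "Digamma (of_nat (n + n + 1))" and ?B = "Digamma (of_nat (n + m + 1))"
    let ?D = "of_nat n + of_nat m + 1 :: complex"
    have key: "u + N*(u*(2*A-B)) - M*(u*(2*A-B))
        = (2*N+1)*(u/D) + (N+M+1)*(N-M)*((u/D)*(2*A - (B + 1/D)))"
      if "D \<noteq> 0" "M = D - N - 1" for A B D M N u :: complex
      using that(1) unfolding that(2) by (simp add: field_simps)
    have "coeff ?L k = ?u n + of_nat n * (?u n * (2*?A - ?B)) - of_nat m * (?u n * (2*?A - ?B))"
      unfolding coeff_L using 2
      by (simp add: murphy_poly_def digamma_murphy_poly_def coeff_poly_of_coeffs digamma_murphy_coeff_def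
          algebra_simps)
    moreover have "coeff ?R k = (2 * of_nat n + 1) * (?u n / ?D)
        + (?D * (of_nat n - of_nat m)) * ((?u n / ?D) * (2 * ?A - (?B + 1 / ?D)))"
    proof -
      have "(of_nat ((n+m+1)*(n-m)) :: complex) = ?D * (of_nat n - of_nat m)"
        using \<open>m < n\<close> by (simp add: of_nat_diff) (simp add: algebra_simps)
      then show ?thesis
        unfolding coeff_R using 2 Digamma_of_nat_shift[of n m]
        by (simp add: digamma_murphy_coeff_def murphy_coeff_Suc_order add_ac)
    qed
    ultimately show ?thesis by (simp only:) (rule key, simp_all)
  next
    case 3
    then show ?thesis unfolding coeff_L coeff_R
      by (simp add: murphy_poly_def digamma_murphy_poly_def coeff_poly_of_coeffs)
  qed
qed

definition legendre_log_formula :: "nat \<Rightarrow> complex \<Rightarrow> nat \<Rightarrow> complex \<Rightarrow> complex" where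
  "legendre_log_formula n e m z = poly ((pderiv ^^ m) (legendre_poly n)) z * Ln (z + e)
    + (Digamma (of_nat (n + m + 1)) - Digamma (of_nat (n - m + 1))) * poly ((pderiv ^^ m) (legendre_poly n)) z
    - e^(n+m) / 2^m * poly (digamma_poly n e m) ((z - e)/2)
    + murphy_scale n e m * inverse ((z + e)^m) * poly (digamma_murphy_poly n e m) ((z - e)/2)"

lemma has_field_derivative_inverse_power:
  fixes w :: "'a::real_normed_field"
  assumes "w \<noteq> 0"
  shows "((\<lambda>w. inverse (w^m)) has_field_derivative - of_nat m * inverse (w^Suc m)) (at w)"
proof -
  have "((\<lambda>w. w^m) has_field_derivative of_nat m * w^(m-1)) (at w)"
    by (auto intro!: derivative_eq_intros)
  from DERIV_inverse_fun[OF this] assms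
  have "((\<lambda>w. inverse (w^m)) has_field_derivative - (of_nat m * w^(m-1) * inverse (w^m * w^m))) (at w)"
    by (simp add: power2_eq_square)
  then show ?thesis
    by (rule DERIV_cong) (use assms in \<open>cases m, simp_all add: field_simps\<close>)
qed

lemma legendre_log_formula_has_derivative:
  assumes "z + e \<notin> \<real>\<^sub>\<le>\<^sub>0"
  shows "(legendre_log_formula n e m has_field_derivative
      (poly ((pderiv ^^ Suc m) (legendre_poly n)) z * Ln (z + e)
        + inverse (z + e) * poly ((pderiv ^^ m) (legendre_poly n)) z)
    + (Digamma (of_nat (n + m + 1)) - Digamma (of_nat (n - m + 1)))
        * poly ((pderiv ^^ Suc m) (legendre_poly n)) z
    - e^(n+m) / 2^m * (poly (pderiv (digamma_poly n e m)) ((z - e)/2) / 2)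
    + ((murphy_scale n e m * (- of_nat m * inverse ((z + e)^Suc m)))
          * poly (digamma_murphy_poly n e m) ((z - e)/2)
        + (poly (pderiv (digamma_murphy_poly n e m)) ((z - e)/2) / 2)
          * (murphy_scale n e m * inverse ((z + e)^m))))
    (at z)"
proof -
  have nz: "z + e \<noteq> 0" using assms by auto
  have half: "((\<lambda>z. (z - e)/2) has_field_derivative 1/2) (at z)"
    and shift: "((\<lambda>z. z + e) has_field_derivative 1) (at z)"
    by (auto intro!: derivative_eq_intros)
  have shifted_poly:
    "((\<lambda>z. poly q ((z - e)/2)) has_field_derivative poly (pderiv q) ((z - e)/2) / 2) (at z)"
    for q :: "complex poly"
    using DERIV_chain2[OF poly_DERIV half] by simp
  have Ln_shift: "((\<lambda>z. Ln (z + e)) has_field_derivative inverse (z + e)) (at z)"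
    using DERIV_chain2[OF has_field_derivative_Ln[OF assms] shift] by simp
  have inverse_shift:
    "((\<lambda>z. inverse ((z + e)^m)) has_field_derivative - of_nat m * inverse ((z + e)^Suc m)) (at z)"
    using DERIV_chain2[OF has_field_derivative_inverse_power[OF nz] shift] by simp
  have "((\<lambda>z. poly ((pderiv ^^ m) (legendre_poly n)) z) has_field_derivative
      poly ((pderiv ^^ Suc m) (legendre_poly n)) z) (at z)"
    by (simp add: poly_DERIV)
  then show ?thesis unfolding legendre_log_formula_def[abs_def]
    by (intro DERIV_add DERIV_diff DERIV_mult DERIV_cmult shifted_poly Ln_shift inverse_shift)
qed

lemma Digamma_order_gap_Suc:
  assumes "m < n"
  shows "Digamma (of_nat (n + Suc m + 1)) - Digamma (of_nat (n - Suc m + 1)) =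
    (Digamma (of_nat (n+m+1)) - Digamma (of_nat (n - m + 1)) :: complex)
      + 1/(of_nat n + of_nat m + 1) + 1/(of_nat n - of_nat m)"
proof -
  have idx: "n + Suc m + 1 = Suc (Suc (n+m))" "n + m + 1 = Suc (n+m)" "n - m + 1 = Suc (Suc (n - Suc m))"
    "n - Suc m + 1 = Suc (n - Suc m)" using assms by auto
  have "(of_nat (Suc (n - Suc m)) :: complex) = of_nat n - of_nat m" using assms by (simp add: of_nat_diff)
  then show ?thesis unfolding idx Digamma_of_nat_Suc by simp
qed

lemma legendre_log_formula_has_derivative_Suc:
  assumes z: "z + e \<notin> \<real>\<^sub>\<le>\<^sub>0" and e: "e * e = 1" and "m < n"
  shows "(legendre_log_formula n e m has_field_derivative legendre_log_formula n e (Suc m) z) (at z)"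
proof -
  let ?P = "\<lambda>m. (pderiv ^^ m) (legendre_poly n)"
    and ?U = "murphy_poly n e" and ?S = "digamma_murphy_poly n e"
  define x where "x = (z - e)/2"
  define a :: complex where "a = of_nat n + of_nat m + 1"
  define b :: complex where "b = of_nat n - of_nat m"
  have nz: "z + e \<noteq> 0" using z by auto
  then have W0: "(z + e)^m \<noteq> 0" by simp
  have ee: "e * (e * w) = w" for w using e by (metis mult.assoc mult_1)
  have a0: "a \<noteq> 0" unfolding a_def by simp
  have b0: "b \<noteq> 0" unfolding b_def using \<open>m < n\<close> by simp
  have ab: "(of_nat ((n+m+1)*(n-m)) :: complex) = a * b"
    unfolding a_def b_def using \<open>m < n\<close> by (simp add: of_nat_diff) (simp add: algebra_simps)
  have a_plus_b: "(of_nat (2*n+1) :: complex) = a + b" unfolding a_def b_def by simp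
  have P_m: "poly (?P m) z = murphy_scale n e m * poly (?U m) x / (z + e)^m"
    using legendre_higher_deriv_eq_murphy[OF e, of m n z] \<open>m < n\<close> W0 unfolding x_def
    by (simp add: field_simps)
  have P_Suc_m: "poly (?P (Suc m)) z
      = murphy_scale n e m * (a*b) * poly (?U (Suc m)) x / ((z + e) * (z + e)^m)"
    using legendre_higher_deriv_eq_murphy[OF e, of "Suc m" n z] \<open>m < n\<close> nz W0
    unfolding x_def murphy_scale_Suc[OF \<open>m < n\<close>] ab power_Suc by (simp add: eq_divide_eq ac_simps)
  have U_m: "poly (?U m) x = (a + b) * poly (?U (Suc m)) x + (a*b) * poly (?S (Suc m)) x
     - (x * poly (pderiv (?S m)) x + e * poly (pderiv (?S m)) x - of_nat m * poly (?S m) x)"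
    using arg_cong[OF digamma_murphy_poly_Suc_order[OF e \<open>m < n\<close>], of "\<lambda>p. poly p x"]
    unfolding ab a_plus_b by (simp add: algebra_simps)
  have digamma_poly_deriv: "poly (pderiv (digamma_poly n e m)) x = e * poly (digamma_poly n e (Suc m)) x"
    unfolding pderiv_digamma_poly[OF \<open>m < n\<close>] by simp
  have x_shift: "x = (z + e)/2 - e" unfolding x_def by (simp add: field_simps)
  have T0: "(2::complex)^m \<noteq> 0" by simp
  have key: "P1*L + inverse w*P0 + hh0*P1 - E/T*(e*Q1/2) + (cm*(-M*inverse(w*W)))*S + (S'/2)*(cm*inverse W)
     = P1*L + hh1*P1 - (e*E)/(2*T)*Q1 + (cm*(a*b))*inverse(w*W)*S1"
    if "w \<noteq> 0" "W \<noteq> 0" "T \<noteq> 0" "P0 = cm*Um/W" "P1 = cm*(a*b)*U1/(w*W)"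
       "Um = (a+b)*U1 + (a*b)*S1 - (x*S' + e*S' - M*S)" "x = w/2 - e" "hh1 = hh0 + 1/a + 1/b"
    for P0 P1 L w hh0 hh1 E T Q1 cm M W S S' S1 Um U1 x :: complex
    using that(1-3) a0 b0 unfolding that(4-8) by (simp add: field_simps ee)
  show ?thesis
    by (rule DERIV_cong[OF legendre_log_formula_has_derivative[OF z]],
        unfold legendre_log_formula_def x_def[symmetric] digamma_poly_deriv
          Digamma_order_gap_Suc[OF \<open>m < n\<close>] murphy_scale_Suc[OF \<open>m < n\<close>] ab power_Suc
          a_def[symmetric] b_def[symmetric],
        use key[OF nz W0 T0 P_m P_Suc_m U_m x_shift refl] in \<open>simp add: algebra_simps\<close>)
qed

lemma open_Compl_real_ray: "open (- (complex_of_real ` {..c}))"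
proof -
  have "- (complex_of_real ` {..c}) = {w. Im w \<noteq> 0} \<union> {w. c < Re w}"
    by (auto simp: complex_eq_iff image_iff)
  then show ?thesis
    by (simp only:) (intro open_Un open_Collect_neq open_Collect_less continuous_intros)
qed

lemma add_unit_notin_nonpos_Reals:
  assumes "z \<notin> complex_of_real ` {..1}" "e = 1 \<or> e = -1"
  shows "z + e \<notin> \<real>\<^sub>\<le>\<^sub>0"
proof
  assume "z + e \<in> \<real>\<^sub>\<le>\<^sub>0"
  then have "z = complex_of_real (Re z)" "Re z \<le> 1"
    using assms(2) by (auto simp: complex_nonpos_Reals_iff complex_eq_iff)
  with assms(1) show False by auto
qed

lemma higher_deriv_legendre_log:
  assumes e: "e = 1 \<or> e = -1"
  shows "m \<le> n \<Longrightarrow> z \<notin> complex_of_real ` {..1} \<Longrightarrow>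
    (deriv ^^ m) (\<lambda>w. legendreP n w * Ln (w + e)) z = legendre_log_formula n e m z"
proof (induction m arbitrary: z)
  case 0
  have "digamma_poly n e 0 = digamma_murphy_poly n e 0" \<comment> \<open>so the two digamma sums cancel\<close>
    unfolding digamma_poly_def digamma_murphy_poly_def digamma_coeff_def digamma_murphy_coeff_def murphy_coeff_def
    by simp
  then show ?case unfolding legendre_log_formula_def murphy_scale_def by (simp add: poly_legendre_poly)
next
  case (Suc m)
  have "e * e = 1" using e by auto
  have "\<forall>\<^sub>F w in nhds z. (deriv ^^ m) (\<lambda>w. legendreP n w * Ln (w + e)) w = legendre_log_formula n e m w"
    using eventually_nhds_in_open[OF open_Compl_real_ray Suc.prems(2)[folded Compl_iff]]
    by eventually_elim (use Suc in auto)
  then have "(deriv ^^ Suc m) (\<lambda>w. legendreP n w * Ln (w + e)) z = deriv (legendre_log_formula n e m) z"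
    by (simp add: deriv_cong_ev)
  also have "\<dots> = legendre_log_formula n e (Suc m) z"
    using Suc.prems add_unit_notin_nonpos_Reals[OF Suc.prems(2) e]
    by (intro DERIV_imp_deriv legendre_log_formula_has_derivative_Suc \<open>e * e = 1\<close>) simp_all
  finally show ?case .
qed

theorem mainTheorem3:
  fixes m n :: nat and e z :: complex
  assumes "m \<le> n"
    and "e = 1 \<or> e = -1"
    and "z \<notin> complex_of_real ` {..1}"
  shows "(deriv ^^ m) (\<lambda>w. legendreP n w * Ln (w + e)) z =
      fact (2*m) / (2^m * fact m) * gegenbauerC (n - m) (of_nat m + 1/2) z * Ln (z + e)
    + fact (2*m) / (2^m * fact m)
        * (Digamma (of_nat (n + m + 1)) - Digamma (of_nat (n - m + 1)))
        * gegenbauerC (n - m) (of_nat m + 1/2) z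
    - e^(n + m) / 2^m * (\<Sum>k=0..n-m. e^k * fact (k + n + m) / (fact k * fact (k + m) * fact (n - m - k))
        * (2 * Digamma (of_nat (k + n + m + 1)) - Digamma (of_nat (k + m + 1))) * ((z - e) / 2)^k)
    + e^n * fact (n + m) / fact (n - m) * inverse ((z + e)^m)
        * (\<Sum>k=0..n. e^k * fact (k + n) / (fact k * fact (k + m) * fact (n - k))
        * (2 * Digamma (of_nat (k + n + 1)) - Digamma (of_nat (k + m + 1))) * ((z - e) / 2)^k)"
proof -
  have "(deriv ^^ m) (\<lambda>w. legendreP n w * Ln (w + e)) z = legendre_log_formula n e m z"
    using higher_deriv_legendre_log assms by blast
  then show ?thesis
    unfolding legendre_log_formula_def poly_higher_pderiv_legendre_poly[OF \<open>m \<le> n\<close>]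
      digamma_poly_def digamma_murphy_poly_def poly_poly_of_coeffs murphy_scale_def
      digamma_coeff_def digamma_murphy_coeff_def murphy_coeff_def atLeast0AtMost
    by (simp add: mult_ac)
qed

end
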